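(* Let $U=\{u_1,\dots,u_{2^m}\}\subseteq\mathbb{F}_2^n\setminus\{0\}$ be a set of $2^m$ distinct nonzero vectors, and let $B:\mathbb{F}_2^n\to\mathbb{F}_2^m$ be a uniformly random linear map. Fix $y\in\mathbb{F}_2^m$ and define $Z_y:=|\{i: Bu_i=y\}|$. Then for every integer $r\ge 0$, with $a=\lceil\log(r+2)\rceil$, \[ \Pr[Z_y>r]\le\left(\prod_{j=0}^{a-1}(r+2-2^j)\right)^{-1}. \]
   Context: $\log$ denotes the base-$2$ logarithm. A uniformly random linear map $\mathbb{F}_2^n\to\mathbb{F}_2^m$ is one chosen uniformly among all linear maps. *)

theory Defs
  imports "HOL-Analysis.Analysis" "HOL-Probability.Probability" "HOL-Library.Z2"
begin

text \<open>Vectors of F_2^n are rendered as bit ^ 'n; a linear map F_2^n -> F_2^m is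
  given by its matrix bit ^ 'n ^ 'm acting via *v.\<close>

end

theory Submission
  imports Defs
begin

text \<open>Count the lists of \<open>a\<close> distinct, linearly independent vectors of \<open>U\<close> that \<open>B\<close>
  maps to \<open>y\<close>. A fixed independent list is mapped onto any prescribed values by the
  fraction \<open>2\<^sup>-\<^sup>m\<^sup>a\<close> of all matrices, and there are at most \<open>|U|\<^sup>a = 2\<^sup>m\<^sup>a\<close> such lists, so the
  expected count is at most \<open>1\<close>. If \<open>Z\<^sub>y > r\<close>, the fibre \<open>S\<close> has at least \<open>r + 1\<close> nonzero
  elements, and the span of \<open>j\<close> chosen vectors meets \<open>S\<close> in at most \<open>2\<^sup>j - 1\<close> of them;
  choosing greedily gives at least \<open>\<Prod>\<^sub>j\<^sub><\<^sub>a (r + 2 - 2\<^sup>j)\<close> lists, a positive number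
  by the choice of \<open>a\<close>. Markov's inequality concludes.\<close>

lemma UNIV_bit: "(UNIV :: bit set) = {0, 1}"
  by (auto intro: bit.exhaust)

instance bit :: finite
  by standard (simp only: UNIV_bit finite.intros)

lemma CARD_bit [simp]: "CARD(bit) = 2"
  by (simp only: UNIV_bit) simp

lemma card_vec_span_le:
  fixes A :: "('a::{field,finite} ^ 'n) set"
  shows "card (vec.span A) \<le> CARD('a) ^ card A"
proof -
  define comb where "comb u = (\<Sum>v\<in>A. u v *s v)" for u :: "'a ^ 'n \<Rightarrow> 'a"
  have "vec.span A = range comb"
    by (simp add: vec.span_finite comb_def)
  also have "\<dots> \<subseteq> comb ` (A \<rightarrow>\<^sub>E UNIV)"
  proof
    fix x assume "x \<in> range comb"
    then obtain u where "x = comb u" by blast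
    moreover have "comb u = comb (restrict u A)"
      unfolding comb_def by (rule sum.cong) simp_all
    ultimately show "x \<in> comb ` (A \<rightarrow>\<^sub>E UNIV)"
      by (intro image_eqI[of _ _ "restrict u A"]) auto
  qed
  finally have "card (vec.span A) \<le> card (comb ` (A \<rightarrow>\<^sub>E UNIV))"
    by (intro card_mono) simp_all
  also have "\<dots> \<le> card (A \<rightarrow>\<^sub>E (UNIV :: 'a set))"
    by (intro card_image_le) (simp add: finite_PiE)
  also have "\<dots> = CARD('a) ^ card A"
    by (simp add: card_PiE)
  finally show ?thesis .
qed

lemma card_le_card_Diff_vec_span:
  fixes S T :: "('a::{field,finite} ^ 'n) set"
  assumes "0 \<notin> S"
  shows "card S + 1 \<le> card (S - vec.span T) + CARD('a) ^ card T"
proof -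
  have "card S = card (S \<inter> vec.span T) + card (S - vec.span T)"
    by (simp add: card_Int_Diff)
  moreover have "card (S \<inter> vec.span T) \<le> card (vec.span T - {0})"
    using assms by (intro card_mono) auto
  moreover have "card (vec.span T - {0}) + 1 = card (vec.span T)"
    using vec.span_zero[of T] card_Diff_singleton[of 0 "vec.span T"] card_gt_0_iff[of "vec.span T"]
    by fastforce
  ultimately show ?thesis
    using card_vec_span_le[of T] by linarith
qed

definition independent_lists :: "('a::field ^ 'n) set \<Rightarrow> nat \<Rightarrow> ('a ^ 'n) list set" where
  "independent_lists S j =
     {ts. length ts = j \<and> set ts \<subseteq> S \<and> distinct ts \<and> vec.independent (set ts)}"

lemma finite_independent_lists [simp]:
  "finite (independent_lists (S :: ('a::{field,finite} ^ 'n) set) j)"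
proof (rule finite_subset)
  show "independent_lists S j \<subseteq> {ts. set ts \<subseteq> S \<and> length ts = j}"
    by (auto simp: independent_lists_def)
qed (simp add: finite_lists_length_eq)

lemma card_independent_lists_le:
  fixes S :: "('a::{field,finite} ^ 'n) set"
  shows "card (independent_lists S j) \<le> card S ^ j"
proof -
  have "card (independent_lists S j) \<le> card {ts. set ts \<subseteq> S \<and> length ts = j}"
    by (intro card_mono) (auto simp: independent_lists_def finite_lists_length_eq)
  then show ?thesis
    by (simp add: card_lists_length_eq)
qed

lemma independent_lists_Suc:
  "independent_lists S (Suc j) =
     (\<lambda>(ts, v). v # ts) ` (SIGMA ts:independent_lists S j. S - vec.span (set ts))"
proof (intro equalityI subsetI)
  fix xs assume "xs \<in> independent_lists S (Suc j)"
  then obtain v ts where xs: "xs = v # ts" and "v \<in> S" "v \<notin> set ts"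
      and "vec.independent (insert v (set ts))" "ts \<in> independent_lists S j"
    by (cases xs) (auto simp: independent_lists_def vec.independent_insert)
  then show "xs \<in> (\<lambda>(ts, v). v # ts) ` (SIGMA ts:independent_lists S j. S - vec.span (set ts))"
    by (auto simp: vec.independent_insert)
next
  fix xs
  assume "xs \<in> (\<lambda>(ts, v). v # ts) ` (SIGMA ts:independent_lists S j. S - vec.span (set ts))"
  then obtain ts v where "xs = v # ts" "ts \<in> independent_lists S j"
      and "v \<in> S" "v \<notin> vec.span (set ts)"
    by auto
  then show "xs \<in> independent_lists S (Suc j)"
    using vec.span_base[of v "set ts"]
    by (auto simp: independent_lists_def vec.independent_insertI)
qed

lemma card_independent_lists_Suc:
  fixes S :: "('a::{field,finite} ^ 'n) set"
  shows "card (independent_lists S (Suc j)) =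
           (\<Sum>ts\<in>independent_lists S j. card (S - vec.span (set ts)))"
proof -
  have "inj_on (\<lambda>(ts, v). v # ts) (SIGMA ts:independent_lists S j. S - vec.span (set ts))"
    by (auto simp: inj_on_def)
  then show ?thesis
    by (simp add: independent_lists_Suc card_image card_SigmaI)
qed

lemma prod_le_card_independent_lists:
  fixes S :: "('a::{field,finite} ^ 'n) set" and k :: real
  assumes "0 \<notin> S" "k \<le> real (card S) + 1" "\<And>i. i < j \<Longrightarrow> real CARD('a) ^ i \<le> k"
  shows "(\<Prod>i<j. k - real CARD('a) ^ i) \<le> card (independent_lists S j)"
  using assms(3)
proof (induction j)
  case 0
  have "independent_lists S 0 = {[]}"
    by (auto simp: independent_lists_def vec.independent_empty)
  then show ?case by simp
next
  case (Suc j)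
  have "(\<Prod>i<Suc j. k - real CARD('a) ^ i)
          = (\<Prod>i<j. k - real CARD('a) ^ i) * (k - real CARD('a) ^ j)"
    by simp
  also have "\<dots> \<le> card (independent_lists S j) * (k - real CARD('a) ^ j)"
    using Suc by (intro mult_right_mono) auto
  also have "\<dots> = (\<Sum>ts\<in>independent_lists S j. k - real CARD('a) ^ j)"
    by simp
  also have "\<dots> \<le> (\<Sum>ts\<in>independent_lists S j. real (card (S - vec.span (set ts))))"
  proof (rule sum_mono)
    fix ts assume "ts \<in> independent_lists S j"
    then have "card (set ts) = j"
      by (simp add: independent_lists_def distinct_card)
    with card_le_card_Diff_vec_span[OF assms(1), of "set ts"]
    have "real (card S) + 1 \<le> card (S - vec.span (set ts)) + real CARD('a) ^ j"
      by (metis of_nat_1 of_nat_add of_nat_le_iff of_nat_power)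
    then show "k - real CARD('a) ^ j \<le> card (S - vec.span (set ts))"
      using assms(2) by linarith
  qed
  also have "\<dots> = card (independent_lists S (Suc j))"
    by (simp add: card_independent_lists_Suc)
  finally show ?case .
qed

lemma matrix_interpolation:
  fixes ts :: "('a::field ^ 'n) list" and zs :: "('a ^ 'm) list"
  assumes "distinct ts" "vec.independent (set ts)" "length zs = length ts"
  obtains B :: "'a ^ 'n ^ 'm" where "map (\<lambda>t. B *v t) ts = zs"
proof -
  obtain g where g: "Vector_Spaces.linear (*s) (*s) g"
      "\<And>t. t \<in> set ts \<Longrightarrow> g t = the (map_of (zip ts zs) t)"
    using vec.linear_independent_extend[OF assms(2), of "\<lambda>t. the (map_of (zip ts zs) t)"]
    by auto
  have "map (\<lambda>t. matrix g *v t) ts = zs"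
  proof (rule nth_equalityI)
    fix i assume "i < length (map (\<lambda>t. matrix g *v t) ts)"
    then show "map (\<lambda>t. matrix g *v t) ts ! i = zs ! i"
      using assms map_of_zip_nth[of ts zs i] by (simp add: matrix_works[OF g(1)] g(2))
  qed (use assms in simp)
  then show ?thesis
    by (rule that)
qed

text \<open>The fibres of \<open>B \<mapsto> map ((*v) B) ts\<close> are translates of its kernel, and by
  \<open>matrix_interpolation\<close> all \<open>CARD('a ^ 'm) ^ length ts\<close> of them are nonempty.\<close>

lemma card_matrices_interpolating:
  fixes ts :: "('a::{field,finite} ^ 'n) list" and zs :: "('a ^ 'm) list"
  assumes "distinct ts" "vec.independent (set ts)" "length zs = length ts"
  shows "card {B :: 'a ^ 'n ^ 'm. map (\<lambda>t. B *v t) ts = zs} * CARD('a ^ 'm) ^ length ts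
           = CARD('a ^ 'n ^ 'm)"
proof -
  define F where "F ws = {B :: 'a ^ 'n ^ 'm. map (\<lambda>t. B *v t) ts = ws}" for ws
  define Z where "Z = {ws :: ('a ^ 'm) list. set ws \<subseteq> UNIV \<and> length ws = length ts}"
  define zeros where "zeros = replicate (length ts) (0 :: 'a ^ 'm)"
  have card_F: "card (F ws) = card (F zeros)" if "ws \<in> Z" for ws
  proof -
    have "length ws = length ts"
      using that by (simp add: Z_def)
    then obtain B0 where "map (\<lambda>t. B0 *v t) ts = ws"
      by (rule matrix_interpolation[OF assms(1,2)])
    then have B0: "B0 \<in> F ws"
      by (simp add: F_def)
    have "F ws = (+) B0 ` F zeros"
    proof (intro equalityI subsetI)
      fix C assume "C \<in> F ws"
      then have "C - B0 \<in> F zeros"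
        using B0 by (auto simp: F_def zeros_def matrix_vector_mult_diff_rdistrib
            list_eq_iff_nth_eq)
      then show "C \<in> (+) B0 ` F zeros"
        by (intro image_eqI[of _ _ "C - B0"]) auto
    qed (use B0 in \<open>auto simp: F_def zeros_def matrix_vector_mult_add_rdistrib
           list_eq_iff_nth_eq\<close>)
    then show ?thesis
      by (simp add: card_image)
  qed
  have "finite Z" "card Z = CARD('a ^ 'm) ^ length ts"
    unfolding Z_def by (simp_all only: finite_lists_length_eq card_lists_length_eq finite)
  have "CARD('a ^ 'n ^ 'm) = card (\<Union>ws\<in>Z. F ws)"
    by (rule arg_cong[of _ _ card]) (auto simp: F_def Z_def)
  also have "\<dots> = (\<Sum>ws\<in>Z. card (F ws))"
    using \<open>finite Z\<close> by (rule card_UN_disjoint) (auto simp: F_def)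
  also have "\<dots> = card (F zs) * CARD('a ^ 'm) ^ length ts"
    using \<open>card Z = _\<close> card_F card_F[of zs] assms(3) by (simp add: Z_def)
  finally show ?thesis
    by (simp add: F_def)
qed

lemma expectation_card_independent_lists_fibre:
  fixes U :: "('a::{field,finite} ^ 'n) set" and y :: "'a ^ 'm"
  shows "measure_pmf.expectation (pmf_of_set (UNIV :: ('a ^ 'n ^ 'm) set))
           (\<lambda>B. real (card (independent_lists {u \<in> U. B *v u = y} j)))
         = card (independent_lists U j) / real CARD('a ^ 'm) ^ j"
proof -
  define L where "L = independent_lists U j"
  have fibre: "independent_lists {u \<in> U. B *v u = y} j = {ts \<in> L. \<forall>t\<in>set ts. B *v t = y}"
    for B
    by (auto simp: L_def independent_lists_def)
  have count: "real (card {B :: 'a ^ 'n ^ 'm. \<forall>t\<in>set ts. B *v t = y})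
                 = CARD('a ^ 'n ^ 'm) / real CARD('a ^ 'm) ^ j" if "ts \<in> L" for ts
  proof -
    have "{B :: 'a ^ 'n ^ 'm. \<forall>t\<in>set ts. B *v t = y}
            = {B. map (\<lambda>t. B *v t) ts = replicate (length ts) y}"
      by (simp add: map_eq_conv flip: map_replicate_const)
    with that card_matrices_interpolating[of ts "replicate (length ts) y"]
    have "card {B :: 'a ^ 'n ^ 'm. \<forall>t\<in>set ts. B *v t = y} * CARD('a ^ 'm) ^ j
            = CARD('a ^ 'n ^ 'm)"
      by (simp add: L_def independent_lists_def)
    then show ?thesis
      by (simp add: eq_divide_eq flip: of_nat_mult of_nat_power)
  qed
  have "(\<Sum>B\<in>UNIV. real (card {ts \<in> L. \<forall>t\<in>set ts. B *v t = y}))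
          = (\<Sum>ts\<in>L. real (card {B :: 'a ^ 'n ^ 'm. \<forall>t\<in>set ts. B *v t = y}))"
    using sum.swap[of "\<lambda>B ts. of_bool (\<forall>t\<in>set ts. B *v t = y) :: real" L UNIV]
    by (simp add: L_def Int_def conj_commute)
  also have "\<dots> = card L * (CARD('a ^ 'n ^ 'm) / real CARD('a ^ 'm) ^ j)"
    by (simp add: count)
  finally show ?thesis
    by (simp add: integral_pmf_of_set fibre L_def)
qed

lemma expectation_card_independent_lists_fibre_le_1:
  fixes U :: "('a::{field,finite} ^ 'n) set" and y :: "'a ^ 'm"
  assumes "card U \<le> CARD('a ^ 'm)"
  shows "measure_pmf.expectation (pmf_of_set (UNIV :: ('a ^ 'n ^ 'm) set))
           (\<lambda>B. real (card (independent_lists {u \<in> U. B *v u = y} j))) \<le> 1"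
proof -
  have "card (independent_lists U j) \<le> CARD('a ^ 'm) ^ j"
    by (rule order.trans[OF card_independent_lists_le power_mono[OF assms]]) simp
  then have "real (card (independent_lists U j)) \<le> real CARD('a ^ 'm) ^ j"
    by (metis of_nat_le_iff of_nat_power)
  then show ?thesis
    by (simp only: expectation_card_independent_lists_fibre divide_le_eq_1) simp
qed

lemma power_less_of_less_nat_ceiling_log:
  fixes b x :: real
  assumes "1 < b" "0 < x" "j < nat \<lceil>log b x\<rceil>"
  shows "b ^ j < x"
proof -
  have "int j < \<lceil>log b x\<rceil>"
    using assms(3) by simp
  then have "real j < log b x"
    by (simp add: less_ceiling_iff)
  then show ?thesis
    using assms(1,2) by (simp add: less_log_iff powr_realpow)
qed

theorem theorem2p2:
  fixes U :: "(bit ^ 'n) set" and y :: "bit ^ 'm" and r :: nat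
  assumes "card U = 2 ^ CARD('m)"
    and "0 \<notin> U"
  shows "measure_pmf.prob (pmf_of_set (UNIV :: (bit ^ 'n ^ 'm) set))
           {B. card {u \<in> U. B *v u = y} > r}
         \<le> 1 / (\<Prod>j<nat \<lceil>log 2 (real r + 2)\<rceil>. (real r + 2 - 2 ^ j))"
proof -
  define a where "a = nat \<lceil>log 2 (real r + 2)\<rceil>"
  define P where "P = (\<Prod>j<a. real r + 2 - 2 ^ j)"
  define X where "X B = real (card (independent_lists {u \<in> U. B *v u = y} a))"
    for B :: "bit ^ 'n ^ 'm"
  let ?M = "measure_pmf (pmf_of_set (UNIV :: (bit ^ 'n ^ 'm) set))"
  have pow_less: "2 ^ j < real r + 2" if "j < a" for j
    using power_less_of_less_nat_ceiling_log[of 2 "real r + 2" j] that by (simp add: a_def)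
  then have "P > 0"
    by (auto simp: P_def intro: prod_pos)
  have "{B. card {u \<in> U. B *v u = y} > r} \<subseteq> {B \<in> space ?M. X B \<ge> P}"
    using prod_le_card_independent_lists[of "{u \<in> U. B *v u = y}" "real r + 2" a for B]
      assms(2) pow_less by (force simp: X_def P_def)
  then have "measure ?M {B. card {u \<in> U. B *v u = y} > r}
               \<le> measure ?M {B \<in> space ?M. X B \<ge> P}"
    by (intro measure_pmf.finite_measure_mono) simp_all
  also have "\<dots> \<le> measure_pmf.expectation (pmf_of_set UNIV) X / P"
    using \<open>P > 0\<close> by (intro integral_Markov_inequality_measure[where A = UNIV])
      (simp_all add: integrable_measure_pmf_finite X_def)
  also have "\<dots> \<le> 1 / P"
  proof (intro divide_right_mono)
    show "measure_pmf.expectation (pmf_of_set UNIV) X \<le> 1"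
      unfolding X_def using assms(1) by (intro expectation_card_independent_lists_fibre_le_1) simp
  qed (use \<open>P > 0\<close> in simp)
  finally show ?thesis
    by (simp add: a_def P_def)
qed

end
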